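(* Let $P\in\mathbb{C}[x,y]$ have no zeros in $\mathbb{R}\times\mathbb{H}$ and no factors in common with $\bar P$; let $M=\mathrm{Ord}(P(0,y))$ and normalize so the coefficient of $y^M$ in $P(0,y)$ is real. Let $A=\tfrac12(P+\bar P)$, $B=\tfrac1{2i}(P-\bar P)$, fix $t\in\mathbb{R}$, and let $y-a_j(x;t)=0$, $j=1,\dots,M$, be the $M$ smooth branches of $A+tB$ through $(0,0)$ (so $A+tB=u\prod_{j=1}^M(y-a_j(x;t))$ locally with $u$ a unit and $a_j(\cdot;t)\in\mathbb{R}\{x\}$). Let $m_j(t)=\mathrm{Ord}\,B(x,a_j(x;t))$ and $$F_k(x,y)=\frac{A(x,y)+tB(x,y)}{\prod_{j=1}^k(y-a_j(x;t))},\qquad k=1,\dots,M.$$ Then the classes of $x^iF_k(x,y)$, for $1\le k\le M$ and $0\le i<m_k(t)$, form a basis of $\mathbb{C}\{x,y\}/(P,\bar P)$. In particular $\dim\mathbb{C}\{x,y\}/(P,\bar P)=\sum_{j=1}^Mm_j(t)$.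
   Context: $\mathbb{H}=\{\operatorname{Im}z>0\}$, $\bar P(x,y)=\overline{P(\bar x,\bar y)}$. $\mathbb{C}\{x,y\}$ is the ring of convergent power series at the origin and $(P,\bar P)$ the ideal they generate; $\mathbb{R}\{x\}$ are real-coefficient convergent series in $x$; a unit is a series nonvanishing at the origin; Ord is order of vanishing at $0$. *)

theory Defs
  imports Complex_Main "HOL-Computational_Algebra.Polynomial_FPS"
begin

text \<open>A polynomial P(x,y) in C[x,y] is a complex poly poly: the outer variable is y,
  the coefficients are polynomials in x.
  A formal power series in x,y is a complex fps fps: fps_nth f j is the coefficient
  of y^j (a power series in x), fps_nth (fps_nth f j) i is the coefficient of x^i y^j.
  Thus fps_X :: complex fps fps is y and fps_const fps_X is x.\<close>

definition eval2 :: "complex poly poly \<Rightarrow> complex \<Rightarrow> complex \<Rightarrow> complex" where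
  "eval2 P x y = poly (map_poly (\<lambda>c. poly c x) P) y"

definition conj_poly2 :: "complex poly poly \<Rightarrow> complex poly poly" where
  "conj_poly2 P = map_poly (map_poly cnj) P"

definition ps_of_poly2 :: "complex poly poly \<Rightarrow> complex fps fps" where
  "ps_of_poly2 P = fps_of_poly (map_poly fps_of_poly P)"

definition conv_ps1 :: "complex fps \<Rightarrow> bool" where
  "conv_ps1 a \<longleftrightarrow> (\<exists>r>0. \<exists>K. \<forall>i. norm (fps_nth a i) * r ^ i \<le> K)"

definition real_ps1 :: "complex fps \<Rightarrow> bool" where
  "real_ps1 a \<longleftrightarrow> conv_ps1 a \<and> (\<forall>i. fps_nth a i \<in> \<real>)"

definition conv_ps2 :: "complex fps fps \<Rightarrow> bool" where
  "conv_ps2 f \<longleftrightarrow> (\<exists>r>0. \<exists>K. \<forall>i j. norm (fps_nth (fps_nth f j) i) * r ^ (i + j) \<le> K)"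

definition ps_ideal2 :: "complex fps fps \<Rightarrow> complex fps fps \<Rightarrow> complex fps fps set" where
  "ps_ideal2 f g = {h1 * f + h2 * g | h1 h2. conv_ps2 h1 \<and> conv_ps2 h2}"

definition quot_basis :: "complex fps fps set \<Rightarrow> 'i set \<Rightarrow> ('i \<Rightarrow> complex fps fps) \<Rightarrow> bool" where
  "quot_basis I S v \<longleftrightarrow> finite S \<and> (\<forall>s\<in>S. conv_ps2 (v s))
     \<and> (\<forall>c. (\<Sum>s\<in>S. fps_const (fps_const (c s)) * v s) \<in> I \<longrightarrow> (\<forall>s\<in>S. c s = 0))
     \<and> (\<forall>f. conv_ps2 f \<longrightarrow> (\<exists>c. f - (\<Sum>s\<in>S. fps_const (fps_const (c s)) * v s) \<in> I))"

end

theory Submission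
  imports Defs "HOL-Analysis.FPS_Convergence" "HOL-Computational_Algebra.Polynomial_Factorial"
    "HOL-Computational_Algebra.Field_as_Ring"
begin

text \<open>
  With G = A + t B one has P = G + (i - t) B and conj P = G - (i + t) B, so the ideal (P, conj P)
  equals (G, B); and G = u W with W = \<Prod>j (y - a_j) and u a unit, so it equals (W, B).
  Each B(x, a_j(x)) is nonzero: otherwise a_j would be a common root of P and conj P, and a
  polynomial of least degree vanishing at a_j would be a common factor.

  Modulo (W, B), a polynomial g in y is reduced one root at a time: g(x, a_n) only matters modulo
  x^m_n, where m_n is the order of B(x, a_n); subtracting its truncation and a multiple of B leaves a
  multiple of y - a_n, and one continues with the quotient. Hence the classes of
  x^i \<Prod>(j > k) (y - a_j) = x^i F_k / u with i < m_k form a basis as far as polynomials are concerned.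
  Power series reduce to polynomials because a power of y lies in (W, B): x^(m_1 + ... + m_M) does,
  and y^M = W modulo x. Convergence in two variables is controlled by the one-variable majorant
  whose n-th coefficient is the sum of |f_ij| over i + j = n.

  The absence of zeros in R x H, the normalisation at x = 0 and the reality of the branches are not
  used: in the paper they serve to produce the branches a_j, which here are given.
\<close>

section \<open>Convergent power series in one variable\<close>

lemma bounded_coeffs_imp_conv_radius_pos:
  fixes a :: "'a::{banach, real_normed_div_algebra} fps"
  assumes "\<exists>r>0. \<exists>K. \<forall>i. norm (fps_nth a i) * r ^ i \<le> K"
  shows "fps_conv_radius a > 0"
proof -
  obtain r K where r: "r > 0" and K: "\<And>i. norm (fps_nth a i) * r ^ i \<le> K"
    using assms by blast
  have "summable (\<lambda>n. fps_nth a n * of_real (r/2) ^ n)"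
  proof (rule summable_comparison_test')
    show "summable (\<lambda>n. K * (1/2) ^ n)" by (intro summable_mult summable_geometric) auto
    fix n
    have "norm (fps_nth a n * of_real (r/2) ^ n) = (norm (fps_nth a n) * r ^ n) * (1/2)^n"
      using r by (simp add: norm_mult norm_power power_divide del: of_real_divide)
    also have "\<dots> \<le> K * (1/2)^n" by (intro mult_right_mono K) auto
    finally show "norm (fps_nth a n * of_real (r/2) ^ n) \<le> K * (1/2)^n" .
  qed
  then have "conv_radius (fps_nth a) \<ge> norm (of_real (r/2) :: 'a)"
    by (rule conv_radius_geI)
  then have "ereal (r/2) \<le> fps_conv_radius a"
    using r by (simp add: fps_conv_radius_def norm_of_real del: of_real_divide)
  then show ?thesis using r by (simp add: less_le_trans[rotated])
qed

lemma conv_radius_pos_imp_bounded_coeffs: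
  fixes a :: "'a::{banach, real_normed_div_algebra} fps"
  assumes "fps_conv_radius a > 0"
  shows "\<exists>r>0. \<exists>K. \<forall>i. norm (fps_nth a i) * r ^ i \<le> K"
proof -
  obtain r :: real where r: "r > 0" "ereal r < fps_conv_radius a"
  proof (cases "fps_conv_radius a")
    case (real x) then show ?thesis using assms that[of "x/2"] by auto
  next
    case PInf then show ?thesis using that[of 1] by auto
  next
    case MInf then show ?thesis using assms by auto
  qed
  define s where "s = (\<lambda>n. norm (fps_nth a n * (of_real r :: 'a) ^ n))"
  have "summable s"
    unfolding s_def by (rule abs_summable_in_conv_radius) (use r in \<open>auto simp: fps_conv_radius_def\<close>)
  then have "s i \<le> suminf s" for i
    using sum_le_suminf[of s "{i}"] by (simp add: s_def)
  then show ?thesis using r by (intro exI[of _ r] conjI exI[of _ "suminf s"]) (auto simp: s_def norm_mult norm_power)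
qed

lemma bounded_coeffs_iff_conv_radius_pos:
  fixes a :: "'a::{banach, real_normed_div_algebra} fps"
  shows "(\<exists>r>0. \<exists>K. \<forall>i. norm (fps_nth a i) * r ^ i \<le> K) \<longleftrightarrow> fps_conv_radius a > 0"
  using bounded_coeffs_imp_conv_radius_pos conv_radius_pos_imp_bounded_coeffs by blast

lemma conv_ps1_iff_conv_radius: "conv_ps1 a \<longleftrightarrow> fps_conv_radius a > 0"
  unfolding conv_ps1_def by (rule bounded_coeffs_iff_conv_radius_pos)

lemma fps_conv_radius_pos_dominated:
  fixes g h :: "real fps"
  assumes "\<And>n. 0 \<le> fps_nth g n" "\<And>n. fps_nth g n \<le> fps_nth h n" "fps_conv_radius h > 0"
  shows "fps_conv_radius g > 0"
proof -
  obtain r K where r: "r > 0" and K: "\<And>n. norm (fps_nth h n) * r ^ n \<le> K"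
    using assms(3) bounded_coeffs_iff_conv_radius_pos by blast
  have "norm (fps_nth g n) * r ^ n \<le> K" for n
    using assms(1,2)[of n] r K[of n] by (smt (verit) mult_right_mono real_norm_def zero_le_power)
  then show ?thesis using r bounded_coeffs_iff_conv_radius_pos by blast
qed

context
  fixes f g :: "'a::{banach, real_normed_div_algebra} fps"
  assumes f: "fps_conv_radius f > 0" and g: "fps_conv_radius g > 0"
begin

lemma fps_conv_radius_add_pos: "fps_conv_radius (f + g) > 0"
  using fps_conv_radius_add[of f g] f g by (auto simp: min_def split: if_splits)

lemma fps_conv_radius_diff_pos: "fps_conv_radius (f - g) > 0"
  using fps_conv_radius_diff[of f g] f g by (auto simp: min_def split: if_splits)

lemma fps_conv_radius_mult_pos: "fps_conv_radius (f * g) > 0"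
  using fps_conv_radius_mult[of f g] f g by (auto simp: min_def split: if_splits)

end

lemma conv_ps1_add [intro]: "conv_ps1 a \<Longrightarrow> conv_ps1 b \<Longrightarrow> conv_ps1 (a + b)"
  unfolding conv_ps1_iff_conv_radius by (rule fps_conv_radius_add_pos)
lemma conv_ps1_diff [intro]: "conv_ps1 a \<Longrightarrow> conv_ps1 b \<Longrightarrow> conv_ps1 (a - b)"
  unfolding conv_ps1_iff_conv_radius by (rule fps_conv_radius_diff_pos)
lemma conv_ps1_mult [intro]: "conv_ps1 a \<Longrightarrow> conv_ps1 b \<Longrightarrow> conv_ps1 (a * b)"
  unfolding conv_ps1_iff_conv_radius by (rule fps_conv_radius_mult_pos)
lemma conv_ps1_uminus [intro]: "conv_ps1 a \<Longrightarrow> conv_ps1 (- a)"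
  unfolding conv_ps1_iff_conv_radius by simp
lemma conv_ps1_const [intro, simp]: "conv_ps1 (fps_const c)"
  unfolding conv_ps1_iff_conv_radius by simp
lemma conv_ps1_X [intro, simp]: "conv_ps1 fps_X"
  unfolding conv_ps1_iff_conv_radius by simp
lemma conv_ps1_X_power [intro, simp]: "conv_ps1 (fps_X ^ n)"
  unfolding conv_ps1_iff_conv_radius by simp
lemma conv_ps1_shift [intro]: "conv_ps1 a \<Longrightarrow> conv_ps1 (fps_shift n a)"
  unfolding conv_ps1_iff_conv_radius by simp
lemma conv_ps1_of_poly [intro, simp]: "conv_ps1 (fps_of_poly p)"
  unfolding conv_ps1_iff_conv_radius by simp
lemma conv_ps1_inverse [intro]: "conv_ps1 a \<Longrightarrow> fps_nth a 0 \<noteq> 0 \<Longrightarrow> conv_ps1 (inverse a)"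
  unfolding conv_ps1_iff_conv_radius by (rule fps_conv_radius_inverse_pos)
lemma conv_ps1_0 [intro, simp]: "conv_ps1 0"
  unfolding conv_ps1_iff_conv_radius by simp
lemma conv_ps1_1 [intro, simp]: "conv_ps1 1"
  unfolding conv_ps1_iff_conv_radius by simp
lemma conv_ps1_sum [intro]: "(\<And>i. i \<in> S \<Longrightarrow> conv_ps1 (f i)) \<Longrightarrow> conv_ps1 (\<Sum>i\<in>S. f i)"
  by (induction S rule: infinite_finite_induct) auto

section \<open>Polynomials over \<open>\<complex>{x}\<close> and products of root factors\<close>

definition conv_poly :: "complex fps poly \<Rightarrow> bool" where
  "conv_poly p \<longleftrightarrow> (\<forall>i. conv_ps1 (coeff p i))"

lemma conv_poly_0 [simp, intro]: "conv_poly 0" by (simp add: conv_poly_def)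
lemma conv_poly_1 [simp, intro]: "conv_poly 1" by (simp add: conv_poly_def coeff_1)
lemma conv_poly_pCons [simp]: "conv_poly (pCons a p) \<longleftrightarrow> conv_ps1 a \<and> conv_poly p"
  by (auto simp: conv_poly_def coeff_pCons split: nat.splits)
lemma conv_poly_add [intro]: "conv_poly p \<Longrightarrow> conv_poly q \<Longrightarrow> conv_poly (p + q)"
  by (auto simp: conv_poly_def)
lemma conv_poly_diff [intro]: "conv_poly p \<Longrightarrow> conv_poly q \<Longrightarrow> conv_poly (p - q)"
  by (auto simp: conv_poly_def)
lemma conv_poly_uminus [intro]: "conv_poly p \<Longrightarrow> conv_poly (- p)"
  by (auto simp: conv_poly_def)
lemma conv_poly_smult [intro]: "conv_ps1 c \<Longrightarrow> conv_poly p \<Longrightarrow> conv_poly (smult c p)"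
  by (auto simp: conv_poly_def)
lemma conv_poly_mult [intro]: "conv_poly p \<Longrightarrow> conv_poly q \<Longrightarrow> conv_poly (p * q)"
  by (auto simp: conv_poly_def coeff_mult)
lemma conv_poly_power [intro]: "conv_poly p \<Longrightarrow> conv_poly (p ^ n)"
  by (induction n) auto
lemma conv_poly_prod [intro]: "(\<And>i. i \<in> S \<Longrightarrow> conv_poly (f i)) \<Longrightarrow> conv_poly (\<Prod>i\<in>S. f i)"
  by (induction S rule: infinite_finite_induct) auto
lemma conv_poly_map_fps_of_poly [intro, simp]: "conv_poly (map_poly fps_of_poly p)"
  by (auto simp: conv_poly_def coeff_map_poly)
lemma conv_ps1_poly [intro]: "conv_poly p \<Longrightarrow> conv_ps1 a \<Longrightarrow> conv_ps1 (poly p a)"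
  by (induction p) auto
lemma conv_poly_synthetic_div [intro]: "conv_poly p \<Longrightarrow> conv_ps1 a \<Longrightarrow> conv_poly (synthetic_div p a)"
  by (induction p) auto

definition root_prod :: "(nat \<Rightarrow> 'a) \<Rightarrow> nat \<Rightarrow> nat \<Rightarrow> 'a::comm_ring_1 poly" where
  "root_prod a k n = (\<Prod>j\<in>{Suc k..n}. [:- a j, 1:])"

lemma root_prod_Suc: "k \<le> n \<Longrightarrow> root_prod a k (Suc n) = [:- a (Suc n), 1:] * root_prod a k n"
  unfolding root_prod_def by (subst prod.nat_ivl_Suc') (auto simp: mult.commute)

lemma root_prod_self [simp]: "root_prod a n n = 1"
  unfolding root_prod_def by simp

lemma root_prod_split: "k \<le> n \<Longrightarrow> root_prod a 0 n = root_prod a 0 k * root_prod a k n"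
proof -
  assume "k \<le> n"
  then have "{Suc 0..n} = {Suc 0..k} \<union> {Suc k..n}" by auto
  then show ?thesis unfolding root_prod_def by (simp add: prod.union_disjoint)
qed

lemma poly_root_prod_root: "j \<in> {Suc k..n} \<Longrightarrow> poly (root_prod a k n) (a j) = 0"
  unfolding root_prod_def poly_prod by (rule prod_zero) auto

lemma conv_poly_root_prod [intro]: "\<forall>j\<in>{Suc k..n}. conv_ps1 (a j) \<Longrightarrow> conv_poly (root_prod a k n)"
  unfolding root_prod_def by (intro conv_poly_prod) auto

lemma fps_of_poly_root_prod:
  "fps_of_poly (root_prod a k n) = (\<Prod>j\<in>{Suc k..n}. fps_X - fps_const (a j :: 'a::comm_ring_1 fps))"
proof -
  have lin: "fps_of_poly [:- b, 1:] = fps_X - fps_const b" for b :: "'a fps"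
    by (rule fps_ext) (simp add: fps_of_poly_pCons coeff_pCons split: nat.splits)
  show ?thesis unfolding root_prod_def fps_of_poly_prod lin ..
qed

definition basis_index :: "(nat \<Rightarrow> nat) \<Rightarrow> nat \<Rightarrow> (nat \<times> nat) set" where
  "basis_index m n = {(k, i). k \<in> {1..n} \<and> i < m k}"

lemma finite_basis_index [simp]: "finite (basis_index m n)"
proof -
  have "basis_index m n = Sigma {1..n} (\<lambda>k. {..<m k})" unfolding basis_index_def by auto
  then show ?thesis by (metis finite_SigmaI finite_atLeastAtMost finite_lessThan)
qed

lemma card_basis_index: "card (basis_index m n) = (\<Sum>j=1..n. m j)"
proof -
  have "basis_index m n = Sigma {1..n} (\<lambda>k. {..<m k})" unfolding basis_index_def by auto
  then show ?thesis by (simp add: card_SigmaI)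
qed

lemma basis_index_Suc: "basis_index m (Suc n) = basis_index m n \<union> (\<lambda>i. (Suc n, i)) ` {..<m (Suc n)}"
  unfolding basis_index_def by (auto simp: image_iff le_Suc_eq)

definition basis_comb :: "(nat \<times> nat \<Rightarrow> 'a) \<Rightarrow> (nat \<Rightarrow> nat) \<Rightarrow> (nat \<Rightarrow> 'a fps) \<Rightarrow> nat \<Rightarrow> 'a::comm_ring_1 fps poly" where
  "basis_comb c m a n = (\<Sum>(k, i)\<in>basis_index m n. smult (fps_const (c (k, i)) * fps_X ^ i) (root_prod a k n))"

lemma basis_comb_0 [simp]: "basis_comb c m a 0 = 0"
  unfolding basis_comb_def basis_index_def by simp

lemma basis_comb_Suc:
  "basis_comb c m a (Suc n) = [:- a (Suc n), 1:] * basis_comb c m a n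
      + [:\<Sum>i<m (Suc n). fps_const (c (Suc n, i)) * fps_X ^ i:]"
proof -
  let ?new = "(\<lambda>i. (Suc n, i)) ` {..<m (Suc n)}"
  let ?term = "\<lambda>n (k, i). smult (fps_const (c (k, i)) * fps_X ^ i) (root_prod a k n)"
  have "basis_comb c m a (Suc n) = (\<Sum>s\<in>basis_index m n. ?term (Suc n) s) + (\<Sum>s\<in>?new. ?term (Suc n) s)"
    unfolding basis_comb_def basis_index_Suc
    by (rule sum.union_disjoint) (simp, simp, auto simp: basis_index_def)
  also have "(\<Sum>s\<in>basis_index m n. ?term (Suc n) s) = [:- a (Suc n), 1:] * basis_comb c m a n"
    unfolding basis_comb_def sum_distrib_left
  proof (rule sum.cong)
    fix s assume "s \<in> basis_index m n"
    then obtain k i where "s = (k, i)" "k \<le> n" by (auto simp: basis_index_def)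
    then show "?term (Suc n) s = [:- a (Suc n), 1:] * ?term n s"
      by (simp only: prod.case root_prod_Suc mult_smult_right)
  qed simp
  also have "(\<Sum>s\<in>?new. ?term (Suc n) s) = (\<Sum>i<m (Suc n). [:fps_const (c (Suc n, i)) * fps_X ^ i:])"
    by (subst sum.reindex) (auto simp: inj_on_def)
  also have "\<dots> = [:\<Sum>i<m (Suc n). fps_const (c (Suc n, i)) * fps_X ^ i:]"
    by (rule sum_to_poly)
  finally show ?thesis .
qed

section \<open>Reduction of polynomials modulo \<open>(W, B)\<close>\<close>

lemma fps_nth_truncated_sum:
  "fps_nth (\<Sum>i<m. fps_const (c i) * fps_X ^ i) k = (if k < m then c k else (0::'a::comm_ring_1))"
proof -
  have "(\<Sum>i<m. c i * (if k = i then 1 else 0)) = (\<Sum>i<m. if k = i then c i else 0)"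
    by (rule sum.cong) auto
  then show ?thesis unfolding fps_sum_nth by (simp add: fps_X_power_iff)
qed

lemma fps_split_at:
  fixes v :: "'a::comm_ring_1 fps"
  shows "v = (\<Sum>i<m. fps_const (fps_nth v i) * fps_X ^ i) + fps_X ^ m * fps_shift m v"
  by (rule fps_ext) (auto simp: fps_nth_truncated_sum fps_X_power_mult_nth)

lemma basis_comb_independent:
  fixes B :: "'a::field fps poly"
  assumes "\<forall>j\<in>{1..n}. poly B (a j) \<noteq> 0"
    and "\<forall>j. m j = subdegree (poly B (a j))"
    and "basis_comb c m a n = \<alpha> * root_prod a 0 n + \<beta> * B"
  shows "\<forall>(k, i)\<in>basis_index m n. c (k, i) = 0"
  using assms(1,3)
proof (induction n arbitrary: \<alpha> \<beta>)
  case 0 then show ?case by (simp add: basis_index_def)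
next
  case (Suc n)
  define b where "b = a (Suc n)"
  define v where "v = (\<Sum>i<m (Suc n). fps_const (c (Suc n, i)) * fps_X ^ i)"
  have eq: "[:- b, 1:] * basis_comb c m a n + [:v:] = \<alpha> * ([:- b, 1:] * root_prod a 0 n) + \<beta> * B"
    using Suc.prems(2) unfolding basis_comb_Suc root_prod_Suc[OF le0] b_def v_def .
  then have "poly ([:- b, 1:] * basis_comb c m a n + [:v:]) b = poly (\<alpha> * ([:- b, 1:] * root_prod a 0 n) + \<beta> * B) b"
    by simp
  then have v_eq: "v = poly \<beta> b * poly B b" by simp
  have Bb: "poly B b \<noteq> 0" and mb: "m (Suc n) = subdegree (poly B b)"
    using Suc.prems(1) assms(2) b_def by auto
  \<comment> \<open>\<open>v\<close> is a polynomial in \<open>x\<close> of degree below the order of \<open>B(x, b)\<close>, yet a multiple of it.\<close>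
  have "poly \<beta> b = 0"
  proof (rule ccontr)
    assume \<beta>b: "poly \<beta> b \<noteq> 0"
    then have "v \<noteq> 0" using v_eq Bb by simp
    moreover have "\<And>k. k \<ge> m (Suc n) \<Longrightarrow> fps_nth v k = 0"
      unfolding v_def fps_nth_truncated_sum by simp
    ultimately have "subdegree v < m (Suc n)"
      using nth_subdegree_nonzero[of v] not_less by blast
    then show False using v_eq \<beta>b Bb mb by (simp add: subdegree_mult)
  qed
  then have v0: "v = 0" using v_eq by simp
  then have new: "c (Suc n, i) = 0" if "i < m (Suc n)" for i
    using that arg_cong[OF v0, of "\<lambda>v. fps_nth v i"] unfolding v_def fps_nth_truncated_sum by simp
  have \<beta>: "\<beta> = [:- b, 1:] * synthetic_div \<beta> b"
    using synthetic_div_correct'[of b \<beta>] \<open>poly \<beta> b = 0\<close> by (simp add: algebra_simps)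
  have "[:- b, 1:] * basis_comb c m a n = [:- b, 1:] * (\<alpha> * root_prod a 0 n + synthetic_div \<beta> b * B)"
    using eq v0 by (subst (asm) \<beta>) (simp add: algebra_simps)
  moreover have "[:- b, 1:] \<noteq> 0" by simp
  ultimately have "basis_comb c m a n = \<alpha> * root_prod a 0 n + synthetic_div \<beta> b * B"
    using mult_left_cancel by blast
  then have "\<forall>(k, i)\<in>basis_index m n. c (k, i) = 0"
    using Suc.IH Suc.prems(1) by auto
  then show ?case unfolding basis_index_Suc using new by auto
qed

lemma reduce_at_root:
  fixes B g :: "complex fps poly"
  assumes cb: "conv_ps1 b" and B: "conv_poly B" "poly B b \<noteq> 0" and g: "conv_poly g"
  shows "\<exists>g' h. conv_poly g' \<and> conv_ps1 h \<and> g = [:- b, 1:] * g'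
           + [:\<Sum>i<subdegree (poly B b). fps_const (fps_nth (poly g b) i) * fps_X ^ i:] + smult h B"
proof -
  define d where "d = subdegree (poly B b)"
  define v where "v = poly g b"
  define e where "e = fps_shift d (poly B b)"
  \<comment> \<open>Chosen so that \<open>h B(x, b)\<close> is the part of \<open>g(x, b)\<close> of order at least \<open>d\<close>.\<close>
  define h where "h = fps_shift d v * inverse e"
  define t where "t = (\<Sum>i<d. fps_const (fps_nth v i) * fps_X ^ i)"
  have B_eq: "poly B b = fps_X ^ d * e" and e0: "fps_nth e 0 \<noteq> 0"
    using B(2) fps_shift_times_fps_X_power[of d "poly B b"] by (simp_all add: d_def e_def mult.commute)
  have "conv_ps1 e" unfolding e_def using B(1) cb by auto
  then have ch: "conv_ps1 h" unfolding h_def v_def using g cb e0 by auto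
  define r where "r = g - [:t:] - smult h B"
  have "poly r b = v - t - h * poly B b" unfolding r_def v_def by simp
  also have "\<dots> = fps_X ^ d * fps_shift d v * (1 - inverse e * e)"
    unfolding h_def B_eq t_def by (subst (1) fps_split_at[of v d]) (simp add: algebra_simps)
  finally have "poly r b = 0" using e0 by (simp add: inverse_mult_eq_1)
  then have r_eq: "r = [:- b, 1:] * synthetic_div r b"
    using synthetic_div_correct'[of b r] by (simp add: algebra_simps)
  have "g = r + [:t:] + smult h B" unfolding r_def by simp
  then have "g = [:- b, 1:] * synthetic_div r b + [:t:] + smult h B"
    by (subst (asm) (1) r_eq)
  moreover have "conv_poly (synthetic_div r b)"
    unfolding r_def t_def using g ch B(1) cb
    by (intro conv_poly_synthetic_div conv_poly_diff conv_poly_smult) (auto intro!: conv_ps1_sum conv_ps1_mult)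
  ultimately show ?thesis using ch unfolding t_def v_def d_def by blast
qed

lemma basis_comb_spans:
  fixes B :: "complex fps poly"
  assumes "\<forall>j\<in>{1..n}. conv_ps1 (a j) \<and> poly B (a j) \<noteq> 0"
    and "\<forall>j. m j = subdegree (poly B (a j))"
    and "conv_poly B" "conv_poly g"
  shows "\<exists>c \<alpha> \<beta>. conv_poly \<alpha> \<and> conv_poly \<beta> \<and> g = basis_comb c m a n + \<alpha> * root_prod a 0 n + \<beta> * B"
  using assms(1,4)
proof (induction n arbitrary: g)
  case 0
  show ?case using 0 by (intro exI[of _ "\<lambda>_. 0"] exI[of _ g] exI[of _ 0]) (simp add: root_prod_def)
next
  case (Suc n)
  define b where "b = a (Suc n)"
  define v where "v = poly g b"
  have cb: "conv_ps1 b" using Suc.prems(1) b_def by auto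
  obtain g' h where g': "conv_poly g'" "conv_ps1 h"
      "g = [:- b, 1:] * g' + [:\<Sum>i<m (Suc n). fps_const (fps_nth v i) * fps_X ^ i:] + smult h B"
    using reduce_at_root[OF cb assms(3) _ Suc.prems(2)] Suc.prems(1) assms(2) unfolding b_def v_def by auto
  obtain c' \<alpha>' \<beta>' where c': "conv_poly \<alpha>'" "conv_poly \<beta>'"
      "g' = basis_comb c' m a n + \<alpha>' * root_prod a 0 n + \<beta>' * B"
    using Suc.IH[OF _ g'(1)] Suc.prems(1) by auto
  define c where "c = (\<lambda>(k, i). if k = Suc n then fps_nth v i else c' (k, i))"
  have "basis_comb c m a n = basis_comb c' m a n"
    unfolding basis_comb_def by (rule sum.cong) (auto simp: c_def basis_index_def)
  then have "g = basis_comb c m a (Suc n) + \<alpha>' * root_prod a 0 (Suc n) + ([:- b, 1:] * \<beta>' + [:h:]) * B"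
    unfolding basis_comb_Suc root_prod_Suc[OF le0] g'(3) c'(3) b_def[symmetric]
    by (simp add: c_def algebra_simps)
  moreover have "conv_poly ([:- b, 1:] * \<beta>' + [:h:])"
    using c'(2) cb g'(2) by (intro conv_poly_add conv_poly_mult) auto
  ultimately show ?case using c'(1) by blast
qed
definition conv_poly_ideal :: "complex fps poly \<Rightarrow> complex fps poly \<Rightarrow> complex fps poly set" where
  "conv_poly_ideal W B = {p. \<exists>\<alpha> \<beta>. conv_poly \<alpha> \<and> conv_poly \<beta> \<and> p = \<alpha> * W + \<beta> * B}"

lemma x_power_subdegree_in_root_ideal:
  fixes B :: "complex fps poly"
  assumes cb: "conv_ps1 b" and B: "conv_poly B" and Bb: "poly B b \<noteq> 0"
  shows "\<exists>\<alpha> \<beta>. conv_poly \<alpha> \<and> conv_poly \<beta> \<and> [:fps_X ^ subdegree (poly B b):] = \<alpha> * [:- b, 1:] + \<beta> * B"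
proof -
  define c where "c = poly B b"
  define e where "e = fps_shift (subdegree c) c"
  define q where "q = synthetic_div B b"
  have c_eq: "c = fps_X ^ subdegree c * e" and e0: "fps_nth e 0 \<noteq> 0"
    using Bb fps_shift_times_fps_X_power[of "subdegree c" c] by (simp_all add: c_def e_def mult.commute)
  have "conv_ps1 e" unfolding e_def c_def using B cb by auto
  then have cie: "conv_ps1 (inverse e)" using e0 by auto
  have B_dec: "B = [:- b, 1:] * q + [:c:]"
    using synthetic_div_correct'[of b B] unfolding q_def c_def by (simp add: algebra_simps)
  have "(- [:inverse e:] * q) * [:- b, 1:] + [:inverse e:] * B = [:inverse e * c:]"
    by (subst B_dec) (simp add: algebra_simps)
  also have "inverse e * c = fps_X ^ subdegree c * (inverse e * e)"
    by (subst c_eq) (simp add: mult_ac)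
  finally have "[:fps_X ^ subdegree c:] = (- [:inverse e:] * q) * [:- b, 1:] + [:inverse e:] * B"
    using e0 by (simp add: inverse_mult_eq_1)
  moreover have "conv_poly (- [:inverse e:] * q)" "conv_poly [:inverse e:]"
    unfolding q_def using cie B cb by auto
  ultimately show ?thesis unfolding c_def by blast
qed

lemma x_power_in_conv_poly_ideal:
  fixes B :: "complex fps poly"
  assumes "\<forall>j\<in>{1..n}. conv_ps1 (a j) \<and> poly B (a j) \<noteq> 0"
    and "\<forall>j. m j = subdegree (poly B (a j))"
    and B: "conv_poly B"
  shows "[:fps_X ^ (\<Sum>j\<in>{1..n}. m j):] \<in> conv_poly_ideal (root_prod a 0 n) B"
  using assms(1)
proof (induction n)
  case 0 show ?case
    unfolding conv_poly_ideal_def by (intro CollectI exI[of _ 1] exI[of _ 0]) (simp add: root_prod_def)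
next
  case (Suc n)
  let ?W = "root_prod a 0 n" and ?L = "[:- a (Suc n), 1:]"
  obtain \<alpha> \<beta> where ab: "conv_poly \<alpha>" "conv_poly \<beta>" "[:fps_X ^ (\<Sum>j\<in>{1..n}. m j):] = \<alpha> * ?W + \<beta> * B"
    using Suc.IH Suc.prems unfolding conv_poly_ideal_def by auto
  obtain \<alpha>1 \<beta>1 where ab1: "conv_poly \<alpha>1" "conv_poly \<beta>1" "[:fps_X ^ m (Suc n):] = \<alpha>1 * ?L + \<beta>1 * B"
    using x_power_subdegree_in_root_ideal[OF _ B, of "a (Suc n)"] Suc.prems assms(2) by auto
  have cW: "conv_poly ?W" using Suc.prems by (intro conv_poly_root_prod) auto
  have cL: "conv_poly ?L" using Suc.prems by auto
  have "[:fps_X ^ (\<Sum>j\<in>{1..Suc n}. m j):] = [:fps_X ^ (\<Sum>j\<in>{1..n}. m j):] * [:fps_X ^ m (Suc n):]"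
    by (simp add: power_add mult.commute)
  also have "\<dots> = (\<alpha> * \<alpha>1) * root_prod a 0 (Suc n) + (\<alpha> * ?W * \<beta>1 + \<beta> * (\<alpha>1 * ?L + \<beta>1 * B)) * B"
    unfolding root_prod_Suc[OF le0] ab(3) ab1(3) by (simp add: algebra_simps)
  finally have "[:fps_X ^ (\<Sum>j\<in>{1..Suc n}. m j):]
      = (\<alpha> * \<alpha>1) * root_prod a 0 (Suc n) + (\<alpha> * ?W * \<beta>1 + \<beta> * (\<alpha>1 * ?L + \<beta>1 * B)) * B" .
  moreover have "conv_poly (\<alpha> * \<alpha>1)" "conv_poly (\<alpha> * ?W * \<beta>1 + \<beta> * (\<alpha>1 * ?L + \<beta>1 * B))"
    by (intro conv_poly_add conv_poly_mult ab(1,2) ab1(1,2) cW cL B)+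
  ultimately show ?case unfolding conv_poly_ideal_def by blast
qed

lemma y_power_minus_root_prod:
  assumes "\<forall>j\<in>{1..n}. conv_ps1 (a j) \<and> fps_nth (a j) 0 = 0"
  shows "\<exists>R. conv_poly R \<and> [:0, 1:] ^ n = root_prod a 0 n + smult fps_X R"
  using assms
proof (induction n)
  case 0 show ?case by (intro exI[of _ 0]) (simp add: root_prod_def)
next
  case (Suc n)
  obtain R where R: "conv_poly R" "[:0, 1:] ^ n = root_prod a 0 n + smult fps_X R" using Suc by auto
  define b where "b = a (Suc n)"
  have cb: "conv_ps1 b" and b0: "fps_nth b 0 = 0" using Suc.prems b_def by auto
  have "b = fps_X * fps_shift 1 b"
    by (rule fps_ext) (use b0 in \<open>simp add: fps_X_mult_nth\<close>)
  then have bX: "[:b:] = smult fps_X [:fps_shift 1 b:]"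
    by (metis smult_pCons smult_0_right)
  have cW: "conv_poly (root_prod a 0 n)" using Suc.prems by (intro conv_poly_root_prod) auto
  have "[:0, 1:] ^ Suc n = [:0, 1:] * (root_prod a 0 n + smult fps_X R)" using R by simp
  also have "\<dots> = root_prod a 0 (Suc n) + [:b:] * root_prod a 0 n + [:0, 1:] * smult fps_X R"
    unfolding root_prod_Suc[OF le0] b_def by (simp add: algebra_simps)
  finally have "[:0, 1:] ^ Suc n = root_prod a 0 (Suc n) + smult fps_X ([:fps_shift 1 b:] * root_prod a 0 n + [:0, 1:] * R)"
    unfolding bX by (simp add: algebra_simps smult_add_right)
  moreover have "conv_poly ([:fps_shift 1 b:] * root_prod a 0 n + [:0, 1:] * R)"
    using cW R(1) cb by (intro conv_poly_add conv_poly_mult) auto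
  ultimately show ?case by blast
qed

lemma y_power_in_conv_poly_ideal:
  fixes B :: "complex fps poly"
  assumes a: "\<forall>j\<in>{1..n}. conv_ps1 (a j) \<and> fps_nth (a j) 0 = 0 \<and> poly B (a j) \<noteq> 0"
    and m: "\<forall>j. m j = subdegree (poly B (a j))"
    and B: "conv_poly B"
  shows "\<exists>K. [:0, 1:] ^ K \<in> conv_poly_ideal (root_prod a 0 n) B"
proof -
  define N where "N = (\<Sum>j\<in>{1..n}. m j)"
  define W where "W = root_prod a 0 n"
  have "[:fps_X ^ N:] \<in> conv_poly_ideal W B"
    unfolding N_def W_def by (rule x_power_in_conv_poly_ideal[OF _ m B]) (use a in auto)
  then obtain \<alpha> \<beta> where ab: "conv_poly \<alpha>" "conv_poly \<beta>" "[:fps_X ^ N:] = \<alpha> * W + \<beta> * B"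
    unfolding conv_poly_ideal_def by blast
  obtain R where R: "conv_poly R" "[:0, 1:] ^ n = W + smult fps_X R"
    unfolding W_def using y_power_minus_root_prod[of n a] a by auto
  \<comment> \<open>\<open>y\<^sup>n = W + x R\<close>, so \<open>(y\<^sup>n)\<^sup>N\<close> is congruent modulo \<open>W\<close> to a multiple of \<open>x\<^sup>N\<close>, which lies in the ideal.\<close>
  have "\<exists>Q. conv_poly Q \<and> (W + smult fps_X R) ^ k = W * Q + smult (fps_X ^ k) (R ^ k)" for k
  proof (induction k)
    case 0 show ?case by (intro exI[of _ 0]) simp
  next
    case (Suc k)
    then obtain Q where Q: "conv_poly Q" "(W + smult fps_X R) ^ k = W * Q + smult (fps_X ^ k) (R ^ k)"
      by auto
    have "(W + smult fps_X R) ^ Suc k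
        = W * (Q * (W + smult fps_X R) + smult (fps_X ^ k) (R ^ k)) + smult (fps_X ^ Suc k) (R ^ Suc k)"
      using Q by (simp add: algebra_simps smult_add_right)
    moreover have "conv_poly (Q * (W + smult fps_X R) + smult (fps_X ^ k) (R ^ k))"
      using Q(1) R(1) a unfolding W_def by (intro conv_poly_add conv_poly_mult conv_poly_smult) auto
    ultimately show ?case by blast
  qed
  then obtain Q where Q: "conv_poly Q" "(W + smult fps_X R) ^ N = W * Q + smult (fps_X ^ N) (R ^ N)"
    by blast
  have "[:0, 1:] ^ (n * N) = W * Q + R ^ N * [:fps_X ^ N:]"
    using Q(2) R(2) by (simp add: power_mult)
  also have "\<dots> = (Q + R ^ N * \<alpha>) * W + (R ^ N * \<beta>) * B"
    unfolding ab(3) by (simp add: algebra_simps)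
  finally show ?thesis
    unfolding conv_poly_ideal_def W_def using Q(1) ab R(1) by (intro exI CollectI conjI) auto
qed

section \<open>Truncation and substitution in \<open>y\<close>\<close>

definition trunc_y :: "nat \<Rightarrow> 'a::zero fps fps \<Rightarrow> 'a fps poly" where
  "trunc_y N F = Abs_poly (\<lambda>j. if j \<le> N then fps_nth F j else 0)"

lemma coeff_trunc_y: "coeff (trunc_y N F) j = (if j \<le> N then fps_nth F j else 0)"
proof -
  have "\<forall>\<^sub>\<infinity> j. (if j \<le> N then fps_nth F j else 0) = 0"
    unfolding MOST_nat by (intro exI[of _ N]) auto
  then show ?thesis unfolding trunc_y_def by (simp add: Abs_poly_inverse)
qed

lemma fps_split_trunc_y:
  "F = fps_of_poly (trunc_y N F) + fps_X ^ Suc N * fps_shift (Suc N) (F :: 'a::comm_ring_1 fps fps)"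
  by (rule fps_ext) (simp add: coeff_trunc_y fps_X_power_mult_nth del: power_Suc)

lemma fps_nth_poly_low_coeffs_zero:
  fixes q :: "'a::comm_ring_1 fps poly"
  assumes a0: "fps_nth a 0 = 0" and "\<And>j. j \<le> N \<Longrightarrow> coeff q j = 0" and "k \<le> N"
  shows "fps_nth (poly q a) k = 0"
proof -
  have "poly q a = (\<Sum>j\<le>degree q. coeff q j * a ^ j)"
    by (simp add: poly_altdef)
  moreover have "fps_nth (coeff q j * a ^ j) k = 0" for j
  proof (cases "j \<le> N")
    case True then show ?thesis using assms(2) by simp
  next
    case False
    then have "\<forall>i\<le>k. fps_nth (a ^ j) i = 0" using startsby_zero_power_prefix[OF a0, of j] assms(3) by auto
    then show ?thesis unfolding fps_mult_nth by (intro sum.neutral) auto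
  qed
  ultimately show ?thesis by (simp add: fps_sum_nth)
qed

text \<open>Substitution \<open>y := a(x)\<close> for \<open>a(0) = 0\<close>: the coefficient of \<open>x\<^sup>k\<close> only depends on the terms of
  \<open>y\<close>-degree at most \<open>k\<close>, so it is computed from a truncation.\<close>
definition subst_y :: "'a::comm_ring_1 fps fps \<Rightarrow> 'a fps \<Rightarrow> 'a fps" where
  "subst_y F a = Abs_fps (\<lambda>k. fps_nth (poly (trunc_y k F) a) k)"

lemma subst_y_nth:
  assumes a0: "fps_nth a 0 = 0" and "k \<le> N"
  shows "fps_nth (subst_y F a) k = fps_nth (poly (trunc_y N F) a) k"
proof -
  have "fps_nth (poly (trunc_y N F - trunc_y k F) a) k = 0"
    by (rule fps_nth_poly_low_coeffs_zero[OF a0, of k]) (use assms(2) in \<open>auto simp: coeff_trunc_y\<close>)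
  then show ?thesis unfolding subst_y_def by simp
qed

lemma subst_y_mult:
  assumes a0: "fps_nth a 0 = 0"
  shows "subst_y (F * G) a = subst_y F a * subst_y G a"
proof (rule fps_ext)
  fix n
  have "coeff (trunc_y n F * trunc_y n G) j = coeff (trunc_y n (F * G)) j" if "j \<le> n" for j
  proof -
    have "coeff (trunc_y n F * trunc_y n G) j = (\<Sum>i\<le>j. fps_nth F i * fps_nth G (j - i))"
      unfolding coeff_mult by (rule sum.cong) (use that in \<open>auto simp: coeff_trunc_y\<close>)
    then show ?thesis using that by (simp add: coeff_trunc_y fps_mult_nth atLeast0AtMost)
  qed
  then have "fps_nth (poly (trunc_y n F * trunc_y n G - trunc_y n (F * G)) a) n = 0"
    by (intro fps_nth_poly_low_coeffs_zero[OF a0, of n]) auto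
  then have "fps_nth (subst_y (F * G) a) n = fps_nth (poly (trunc_y n F) a * poly (trunc_y n G) a) n"
    by (simp add: subst_y_def algebra_simps)
  also have "\<dots> = fps_nth (subst_y F a * subst_y G a) n"
    unfolding fps_mult_nth using subst_y_nth[OF a0, of _ n] by (intro sum.cong) auto
  finally show "fps_nth (subst_y (F * G) a) n = fps_nth (subst_y F a * subst_y G a) n" .
qed

lemma subst_y_fps_of_poly:
  assumes a0: "fps_nth a 0 = 0"
  shows "subst_y (fps_of_poly p) a = poly p a"
proof (rule fps_ext)
  fix n
  have "trunc_y (max n (degree p)) (fps_of_poly p) = p"
    by (rule poly_eqI) (auto simp: coeff_trunc_y coeff_eq_0)
  then show "fps_nth (subst_y (fps_of_poly p) a) n = fps_nth (poly p a) n"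
    using subst_y_nth[OF a0, of n "max n (degree p)"] by simp
qed

lemma subst_y_fps_X_nth: "fps_nth (subst_y F fps_X) n = (\<Sum>j\<le>n. fps_nth (fps_nth F j) (n - j))"
proof -
  have "fps_nth (subst_y F fps_X) n = fps_nth (poly (trunc_y n F) fps_X) n" by (rule subst_y_nth) auto
  also have "poly (trunc_y n F) fps_X = (\<Sum>j\<le>n. fps_nth F j * fps_X ^ j)"
  proof -
    have "degree (trunc_y n F) \<le> n" by (rule degree_le) (auto simp: coeff_trunc_y)
    then have "poly (trunc_y n F) fps_X = (\<Sum>j\<le>n. coeff (trunc_y n F) j * fps_X ^ j)"
      by (simp add: poly_altdef) (rule sum.mono_neutral_left, auto simp: coeff_eq_0)
    then show ?thesis by (simp add: coeff_trunc_y)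
  qed
  also have "fps_nth \<dots> n = (\<Sum>j\<le>n. fps_nth (fps_nth F j) (n - j))"
    unfolding fps_sum_nth by (rule sum.cong) (auto simp: fps_X_power_mult_right_nth)
  finally show ?thesis .
qed

definition fps_geometric :: "'a::comm_ring_1 fps \<Rightarrow> 'a fps" where
  "fps_geometric E = Abs_fps (\<lambda>n. fps_nth (\<Sum>l\<le>n. E ^ l) n)"

lemma fps_geometric_nth:
  assumes E0: "fps_nth E 0 = 0" and "k \<le> n"
  shows "fps_nth (fps_geometric E) k = fps_nth (\<Sum>l\<le>n. E ^ l) k"
proof -
  have "{..n} = {..k} \<union> {k<..n}" using assms(2) by auto
  then have "(\<Sum>l\<le>n. E ^ l) = (\<Sum>l\<le>k. E ^ l) + (\<Sum>l\<in>{k<..n}. E ^ l)"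
    by (simp add: sum.union_disjoint ivl_disj_int)
  moreover have "fps_nth (\<Sum>l\<in>{k<..n}. E ^ l) k = 0"
    unfolding fps_sum_nth by (rule sum.neutral) (use startsby_zero_power_prefix[OF E0] in auto)
  ultimately show ?thesis by (simp add: fps_geometric_def)
qed

lemma fps_geometric_inverse:
  assumes E0: "fps_nth E 0 = 0"
  shows "(1 - E) * fps_geometric E = 1"
proof (rule fps_ext)
  fix n
  have "fps_nth ((1 - E) * fps_geometric E) n = fps_nth ((1 - E) * (\<Sum>l\<le>n. E ^ l)) n"
    unfolding fps_mult_nth using fps_geometric_nth[OF E0, of _ n] by (intro sum.cong) auto
  also have "(1 - E) * (\<Sum>l\<le>n. E ^ l) = 1 - E ^ Suc n" by (rule sum_gp_basic)
  also have "fps_nth (1 - E ^ Suc n) n = fps_nth 1 n"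
    using startsby_zero_power_prefix[OF E0, of "Suc n"] by simp
  finally show "fps_nth ((1 - E) * fps_geometric E) n = fps_nth 1 n" .
qed

section \<open>Convergent power series in two variables\<close>

definition norm_coeffs2 :: "complex fps fps \<Rightarrow> real fps fps" where
  "norm_coeffs2 f = Abs_fps (\<lambda>j. Abs_fps (\<lambda>i. norm (fps_nth (fps_nth f j) i)))"

lemma norm_coeffs2_nth [simp]: "fps_nth (fps_nth (norm_coeffs2 f) j) i = norm (fps_nth (fps_nth f j) i)"
  by (simp add: norm_coeffs2_def)

definition diag_norm :: "complex fps fps \<Rightarrow> real fps" where
  "diag_norm f = subst_y (norm_coeffs2 f) fps_X"

lemma diag_norm_nth: "fps_nth (diag_norm f) n = (\<Sum>j\<le>n. norm (fps_nth (fps_nth f j) (n - j)))"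
  unfolding diag_norm_def subst_y_fps_X_nth by simp

lemma diag_norm_nonneg: "fps_nth (diag_norm f) n \<ge> 0"
  unfolding diag_norm_nth by (intro sum_nonneg) auto

lemma norm_coeff_le_diag_norm: "norm (fps_nth (fps_nth f j) i) \<le> fps_nth (diag_norm f) (i + j)"
proof -
  have "norm (fps_nth (fps_nth f j) i) = (\<Sum>j'\<in>{j}. norm (fps_nth (fps_nth f j') (i + j - j')))" by simp
  also have "\<dots> \<le> (\<Sum>j'\<le>i + j. norm (fps_nth (fps_nth f j') (i + j - j')))"
    by (rule sum_mono2) auto
  finally show ?thesis unfolding diag_norm_nth .
qed

lemma conv_ps2_iff_diag_norm: "conv_ps2 f \<longleftrightarrow> fps_conv_radius (diag_norm f) > 0"
  unfolding bounded_coeffs_iff_conv_radius_pos[symmetric]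
proof
  assume "conv_ps2 f"
  then obtain r K where r: "r > 0" and K: "\<And>i j. norm (fps_nth (fps_nth f j) i) * r ^ (i + j) \<le> K"
    unfolding conv_ps2_def by blast
  have "norm (fps_nth (fps_nth f 0) 0) \<le> K" using K[of 0 0] by simp
  then have K0: "K \<ge> 0" using norm_ge_zero order_trans by blast
  have "norm (fps_nth (diag_norm f) n) * (r/2) ^ n \<le> K" for n
  proof -
    have "norm (fps_nth (diag_norm f) n) * (r/2) ^ n
        = (\<Sum>j\<le>n. norm (fps_nth (fps_nth f j) (n - j)) * r ^ n) / 2 ^ n"
      using diag_norm_nonneg[of f n] by (simp add: diag_norm_nth sum_distrib_right power_divide)
    also have "\<dots> \<le> (\<Sum>j\<le>n. K) / 2 ^ n"
    proof (intro divide_right_mono sum_mono)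
      fix j assume "j \<in> {..n}"
      then show "norm (fps_nth (fps_nth f j) (n - j)) * r ^ n \<le> K" using K[of j "n - j"] by simp
    qed simp
    also have "\<dots> = (real n + 1) * K / 2 ^ n" by simp
    also have "\<dots> \<le> K"
    proof -
      have "real n + 1 \<le> 2 ^ n" by (induction n) auto
      then have "(real n + 1) * K \<le> 2 ^ n * K" using K0 by (intro mult_right_mono) auto
      then show ?thesis by (simp add: field_simps)
    qed
    finally show ?thesis .
  qed
  then show "\<exists>r>0. \<exists>K. \<forall>n. norm (fps_nth (diag_norm f) n) * r ^ n \<le> K"
    using r by (intro exI[of _ "r/2"]) auto
next
  assume "\<exists>r>0. \<exists>K. \<forall>n. norm (fps_nth (diag_norm f) n) * r ^ n \<le> K"
  then obtain r K where r: "r > 0" and K: "\<And>n. norm (fps_nth (diag_norm f) n) * r ^ n \<le> K"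
    by blast
  have "norm (fps_nth (fps_nth f j) i) * r ^ (i + j) \<le> K" for i j
  proof -
    have "norm (fps_nth (fps_nth f j) i) * r ^ (i + j) \<le> fps_nth (diag_norm f) (i + j) * r ^ (i + j)"
      using r by (intro mult_right_mono norm_coeff_le_diag_norm) auto
    also have "\<dots> \<le> K" using K[of "i + j"] diag_norm_nonneg[of f "i + j"] by simp
    finally show ?thesis .
  qed
  then show "conv_ps2 f" unfolding conv_ps2_def using r by blast
qed

lemma diag_norm_mult_le: "fps_nth (diag_norm (f * g)) n \<le> fps_nth (diag_norm f * diag_norm g) n"
proof -
  have "norm (fps_nth (fps_nth (f * g) j) i) \<le> fps_nth (fps_nth (norm_coeffs2 f * norm_coeffs2 g) j) i" for i j
  proof -
    have "norm (fps_nth (fps_nth (f * g) j) i)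
        = norm (\<Sum>l = 0..j. \<Sum>i1 = 0..i. fps_nth (fps_nth f l) i1 * fps_nth (fps_nth g (j - l)) (i - i1))"
      by (simp add: fps_mult_nth fps_sum_nth)
    also have "\<dots> \<le> (\<Sum>l = 0..j. \<Sum>i1 = 0..i. norm (fps_nth (fps_nth f l) i1) * norm (fps_nth (fps_nth g (j - l)) (i - i1)))"
      by (rule order_trans[OF norm_sum sum_mono], rule order_trans[OF norm_sum sum_mono]) (simp add: norm_mult)
    also have "\<dots> = fps_nth (fps_nth (norm_coeffs2 f * norm_coeffs2 g) j) i"
      by (simp add: fps_mult_nth fps_sum_nth)
    finally show ?thesis .
  qed
  then have "fps_nth (diag_norm (f * g)) n \<le> fps_nth (subst_y (norm_coeffs2 f * norm_coeffs2 g) fps_X) n"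
    unfolding diag_norm_nth subst_y_fps_X_nth by (intro sum_mono) simp
  also have "subst_y (norm_coeffs2 f * norm_coeffs2 g) fps_X = diag_norm f * diag_norm g"
    unfolding diag_norm_def by (rule subst_y_mult) simp
  finally show ?thesis .
qed

lemma diag_norm_add_le: "fps_nth (diag_norm (f + g)) n \<le> fps_nth (diag_norm f + diag_norm g) n"
  unfolding diag_norm_nth fps_add_nth sum.distrib[symmetric]
  by (intro sum_mono) (simp add: norm_triangle_ineq)

lemma diag_norm_power_le: "fps_nth (diag_norm (E ^ l)) k \<le> fps_nth (diag_norm E ^ l) k"
proof (induction l arbitrary: k)
  case 0
  have "fps_nth (diag_norm 1) k = fps_nth (1 :: real fps) k"
    by (cases k) (auto simp: diag_norm_nth intro!: sum.neutral)
  then show ?case by simp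
next
  case (Suc l)
  have "fps_nth (diag_norm (E * E ^ l)) k \<le> fps_nth (diag_norm E * diag_norm (E ^ l)) k"
    by (rule diag_norm_mult_le)
  also have "\<dots> \<le> fps_nth (diag_norm E * diag_norm E ^ l) k"
    unfolding fps_mult_nth by (intro sum_mono mult_left_mono Suc.IH diag_norm_nonneg)
  finally show ?case by simp
qed

lemma conv_ps2_mult [intro]: "conv_ps2 f \<Longrightarrow> conv_ps2 g \<Longrightarrow> conv_ps2 (f * g)"
  unfolding conv_ps2_iff_diag_norm
  by (rule fps_conv_radius_pos_dominated[OF diag_norm_nonneg diag_norm_mult_le fps_conv_radius_mult_pos])

lemma conv_ps2_add [intro]: "conv_ps2 f \<Longrightarrow> conv_ps2 g \<Longrightarrow> conv_ps2 (f + g)"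
  unfolding conv_ps2_iff_diag_norm
  by (rule fps_conv_radius_pos_dominated[OF diag_norm_nonneg diag_norm_add_le fps_conv_radius_add_pos])

lemma conv_ps2_uminus [intro]: "conv_ps2 f \<Longrightarrow> conv_ps2 (- f)"
  unfolding conv_ps2_def by simp

lemma conv_ps2_diff [intro]: "conv_ps2 f \<Longrightarrow> conv_ps2 g \<Longrightarrow> conv_ps2 (f - g)"
  using conv_ps2_add[of f "- g"] by auto

lemma conv_ps2_const [intro]:
  assumes "conv_ps1 a" shows "conv_ps2 (fps_const a)"
proof -
  obtain r K where r: "r > 0" and K: "\<And>i. norm (fps_nth a i) * r ^ i \<le> K"
    using assms unfolding conv_ps1_def by blast
  have "norm (fps_nth a 0) \<le> K" using K[of 0] by simp
  then have "0 \<le> K" using norm_ge_zero order_trans by blast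
  then show ?thesis unfolding conv_ps2_def using r K by (intro exI[of _ r]) auto
qed

lemma conv_ps2_0 [intro, simp]: "conv_ps2 0"
  unfolding conv_ps2_def by (intro exI[of _ 1]) auto

lemma conv_ps2_X [intro, simp]: "conv_ps2 fps_X"
  unfolding conv_ps2_def by (intro exI[of _ 1] conjI exI[of _ 1]) auto

lemma conv_ps2_power [intro]: "conv_ps2 f \<Longrightarrow> conv_ps2 (f ^ n)"
  using conv_ps2_const[of 1] by (induction n) auto

lemma conv_ps2_sum [intro]: "(\<And>i. i \<in> S \<Longrightarrow> conv_ps2 (f i)) \<Longrightarrow> conv_ps2 (\<Sum>i\<in>S. f i)"
  by (induction S rule: infinite_finite_induct) auto

lemma conv_ps2_fps_of_poly [intro]:
  assumes "conv_poly p" shows "conv_ps2 (fps_of_poly p)"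
proof -
  have "fps_of_poly p = (\<Sum>j\<le>degree p. fps_const (coeff p j) * fps_X ^ j)"
    by (subst poly_as_sum_of_monoms[symmetric]) (simp add: fps_of_poly_sum fps_of_poly_monom)
  also have "conv_ps2 \<dots>" using assms unfolding conv_poly_def by auto
  finally show ?thesis .
qed

lemma conv_ps1_nth [intro]:
  assumes "conv_ps2 f" shows "conv_ps1 (fps_nth f j)"
proof -
  obtain r K where r: "r > 0" and K: "\<And>i j. norm (fps_nth (fps_nth f j) i) * r ^ (i + j) \<le> K"
    using assms unfolding conv_ps2_def by blast
  have "norm (fps_nth (fps_nth f j) i) * r ^ i \<le> K / r ^ j" for i
    using K[of j i] r by (simp add: field_simps power_add)
  then show ?thesis unfolding conv_ps1_def using r by blast
qed

lemma conv_ps2_shift [intro]: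
  assumes "conv_ps2 f" shows "conv_ps2 (fps_shift n f)"
proof -
  obtain r K where r: "r > 0" and K: "\<And>i j. norm (fps_nth (fps_nth f j) i) * r ^ (i + j) \<le> K"
    using assms unfolding conv_ps2_def by blast
  have "norm (fps_nth (fps_nth (fps_shift n f) j) i) * r ^ (i + j) \<le> K / r ^ n" for i j
    using K[of "j + n" i] r by (simp add: field_simps power_add)
  then show ?thesis unfolding conv_ps2_def using r by blast
qed

lemma conv_poly_trunc_y: "conv_ps2 f \<Longrightarrow> conv_poly (trunc_y N f)"
  unfolding conv_poly_def coeff_trunc_y by auto

lemma diag_norm_fps_geometric_le:
  assumes E0: "fps_nth E 0 = 0"
  shows "fps_nth (diag_norm (fps_geometric E)) n \<le> fps_nth (fps_geometric (diag_norm E)) n"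
proof -
  have T0: "fps_nth (diag_norm E) 0 = 0" unfolding diag_norm_nth using E0 by simp
  have "fps_nth (diag_norm (fps_geometric E)) n \<le> (\<Sum>j\<le>n. \<Sum>l\<le>n. norm (fps_nth (fps_nth (E ^ l) j) (n - j)))"
    unfolding diag_norm_nth
  proof (rule sum_mono)
    fix j assume j: "j \<in> {..n}"
    have "norm (fps_nth (fps_nth (fps_geometric E) j) (n - j)) \<le> (\<Sum>l\<le>j. norm (fps_nth (fps_nth (E ^ l) j) (n - j)))"
      unfolding fps_geometric_def by (simp add: fps_sum_nth norm_sum)
    also have "\<dots> \<le> (\<Sum>l\<le>n. norm (fps_nth (fps_nth (E ^ l) j) (n - j)))"
      by (rule sum_mono2) (use j in auto)
    finally show "norm (fps_nth (fps_nth (fps_geometric E) j) (n - j)) \<le> \<dots>" .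
  qed
  also have "\<dots> = (\<Sum>l\<le>n. fps_nth (diag_norm (E ^ l)) n)"
    by (subst sum.swap) (simp add: diag_norm_nth)
  also have "\<dots> \<le> (\<Sum>l\<le>n. fps_nth (diag_norm E ^ l) n)"
    by (intro sum_mono diag_norm_power_le)
  also have "\<dots> = fps_nth (fps_geometric (diag_norm E)) n"
    using fps_geometric_nth[OF T0, of n n] by (simp add: fps_sum_nth)
  finally show ?thesis .
qed

lemma conv_ps2_fps_geometric:
  assumes "conv_ps2 E" and E0: "fps_nth E 0 = 0"
  shows "conv_ps2 (fps_geometric E)"
proof -
  have T0: "fps_nth (diag_norm E) 0 = 0" unfolding diag_norm_nth using E0 by simp
  have "fps_geometric (diag_norm E) = inverse (1 - diag_norm E)"
    using fps_inverse_unique[OF fps_geometric_inverse[OF T0]] by simp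
  moreover have "fps_conv_radius (1 - diag_norm E) > 0"
    using assms(1) by (intro fps_conv_radius_diff_pos) (auto simp: conv_ps2_iff_diag_norm)
  ultimately have "fps_conv_radius (fps_geometric (diag_norm E)) > 0"
    using T0 by (simp add: fps_conv_radius_inverse_pos)
  then show ?thesis unfolding conv_ps2_iff_diag_norm
    by (rule fps_conv_radius_pos_dominated[OF diag_norm_nonneg diag_norm_fps_geometric_le[OF E0]])
qed

lemma conv_ps2_unit_inverse:
  assumes cu: "conv_ps2 u" and u0: "fps_nth (fps_nth u 0) 0 \<noteq> 0"
  obtains w where "conv_ps2 w" "u * w = 1"
proof -
  \<comment> \<open>Dividing by \<open>u(x, 0)\<close> first makes \<open>u = c\<^sup>-\<^sup>1 (1 - E)\<close> with \<open>E\<close> divisible by \<open>y\<close>.\<close>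
  define c where "c = inverse (fps_nth u 0)"
  have cc: "conv_ps1 c" unfolding c_def using cu u0 by auto
  define E where "E = 1 - fps_const c * u"
  have E0: "fps_nth E 0 = 0" unfolding E_def c_def using u0 by (simp add: inverse_mult_eq_1)
  have "conv_ps2 E" unfolding E_def using cu cc conv_ps2_const[of 1] by auto
  then have "conv_ps2 (fps_const c * fps_geometric E)" using cc E0 by (auto intro: conv_ps2_fps_geometric)
  moreover have "u * (fps_const c * fps_geometric E) = 1"
    using fps_geometric_inverse[OF E0] unfolding E_def by (simp add: algebra_simps)
  ultimately show ?thesis by (rule that)
qed

section \<open>Quotients of \<open>\<complex>{x,y}\<close> by two-generator ideals\<close>

lemma ps_ideal2_mult:
  assumes "p \<in> ps_ideal2 f g" "conv_ps2 h" shows "h * p \<in> ps_ideal2 f g"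
proof -
  obtain h1 h2 where "conv_ps2 h1" "conv_ps2 h2" "p = h1 * f + h2 * g"
    using assms(1) unfolding ps_ideal2_def by blast
  moreover from this have "h * p = (h * h1) * f + (h * h2) * g" by (simp add: algebra_simps)
  ultimately show ?thesis unfolding ps_ideal2_def using assms(2) by blast
qed

lemma ps_ideal2_add:
  assumes "p \<in> ps_ideal2 f g" "q \<in> ps_ideal2 f g" shows "p + q \<in> ps_ideal2 f g"
proof -
  obtain h1 h2 k1 k2 where "conv_ps2 h1" "conv_ps2 h2" "p = h1 * f + h2 * g"
      "conv_ps2 k1" "conv_ps2 k2" "q = k1 * f + k2 * g"
    using assms unfolding ps_ideal2_def by blast
  moreover from this have "p + q = (h1 + k1) * f + (h2 + k2) * g" by (simp add: algebra_simps)
  ultimately show ?thesis unfolding ps_ideal2_def by blast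
qed

lemma ps_ideal2_subset:
  assumes "conv_ps2 c11" "conv_ps2 c12" "conv_ps2 c21" "conv_ps2 c22"
    and "f = c11 * f' + c12 * g'" "g = c21 * f' + c22 * g'"
  shows "ps_ideal2 f g \<subseteq> ps_ideal2 f' g'"
proof
  fix p assume "p \<in> ps_ideal2 f g"
  then obtain h1 h2 where h: "conv_ps2 h1" "conv_ps2 h2" "p = h1 * f + h2 * g"
    unfolding ps_ideal2_def by blast
  then have "p = (h1 * c11 + h2 * c21) * f' + (h1 * c12 + h2 * c22) * g'"
    using assms(5,6) by (simp add: algebra_simps)
  then show "p \<in> ps_ideal2 f' g'" unfolding ps_ideal2_def using h assms(1-4) by blast
qed

lemma quot_basis_mult_unit:
  assumes qb: "quot_basis (ps_ideal2 f g) S v"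
    and u: "conv_ps2 u" "conv_ps2 w" "u * w = 1"
  shows "quot_basis (ps_ideal2 (u * f) g) S (\<lambda>s. u * v s)"
proof -
  have uw: "u * (w * p) = p" and wu: "w * (u * p) = p" for p
    using u(3) by (metis mult.assoc mult_1, metis mult.assoc mult.commute mult_1)
  have c1: "conv_ps2 1" using conv_ps2_const[of 1] by simp
  have "ps_ideal2 (u * f) g \<subseteq> ps_ideal2 f g"
    using u c1 by (intro ps_ideal2_subset[of u 0 0 1]) auto
  moreover have "ps_ideal2 f g \<subseteq> ps_ideal2 (u * f) g"
    using u c1 wu by (intro ps_ideal2_subset[of w 0 0 1]) auto
  ultimately have I: "ps_ideal2 (u * f) g = ps_ideal2 f g" by blast
  have sum_u: "(\<Sum>s\<in>S. fps_const (fps_const (c s)) * (u * v s)) = u * (\<Sum>s\<in>S. fps_const (fps_const (c s)) * v s)"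
    for c by (simp add: sum_distrib_left mult.left_commute)
  show ?thesis
    unfolding quot_basis_def I
  proof (intro conjI allI impI ballI)
    show "finite S" "\<And>s. s \<in> S \<Longrightarrow> conv_ps2 (u * v s)"
      using qb u unfolding quot_basis_def by auto
    show "c s = 0" if "(\<Sum>s\<in>S. fps_const (fps_const (c s)) * (u * v s)) \<in> ps_ideal2 f g" "s \<in> S" for c s
    proof -
      have "w * (u * (\<Sum>s\<in>S. fps_const (fps_const (c s)) * v s)) \<in> ps_ideal2 f g"
        using ps_ideal2_mult[OF that(1) u(2)] unfolding sum_u .
      then show ?thesis using qb that(2) unfolding wu quot_basis_def by blast
    qed
    show "\<exists>c. p - (\<Sum>s\<in>S. fps_const (fps_const (c s)) * (u * v s)) \<in> ps_ideal2 f g" if "conv_ps2 p" for p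
    proof -
      obtain c where "w * p - (\<Sum>s\<in>S. fps_const (fps_const (c s)) * v s) \<in> ps_ideal2 f g"
        using qb \<open>conv_ps2 p\<close> u(2) unfolding quot_basis_def by blast
      from ps_ideal2_mult[OF this u(1)]
      have "p - (\<Sum>s\<in>S. fps_const (fps_const (c s)) * (u * v s)) \<in> ps_ideal2 f g"
        unfolding sum_u right_diff_distrib uw .
      then show ?thesis by blast
    qed
  qed
qed

lemma quot_basis_cong:
  assumes "\<And>s. s \<in> S \<Longrightarrow> v s = v' s"
  shows "quot_basis I S v = quot_basis I S v'"
proof -
  have "(\<Sum>s\<in>S. fps_const (fps_const (c s)) * v s) = (\<Sum>s\<in>S. fps_const (fps_const (c s)) * v' s)" for c
    using assms by (intro sum.cong) auto
  then show ?thesis using assms unfolding quot_basis_def by simp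
qed

lemma quot_basis_bij_betw:
  assumes e: "bij_betw e T S" and qb: "quot_basis I S v"
  shows "quot_basis I T (v \<circ> e)"
proof -
  have conv: "\<forall>s\<in>S. conv_ps2 (v s)"
    and indep: "\<And>c. (\<Sum>s\<in>S. fps_const (fps_const (c s)) * v s) \<in> I \<Longrightarrow> \<forall>s\<in>S. c s = 0"
    and span: "\<And>f. conv_ps2 f \<Longrightarrow> \<exists>c. f - (\<Sum>s\<in>S. fps_const (fps_const (c s)) * v s) \<in> I"
    using qb unfolding quot_basis_def by blast+
  have "finite T" using qb bij_betw_finite[OF e] unfolding quot_basis_def by blast
  have sum_e: "(\<Sum>i\<in>T. fps_const (fps_const (c (e i))) * v (e i)) = (\<Sum>s\<in>S. fps_const (fps_const (c s)) * v s)"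
    for c by (rule sum.reindex_bij_betw[OF e])
  have inv: "inv_into T e (e i) = i" if "i \<in> T" for i
    using e that by (simp add: bij_betw_inv_into_left)
  show ?thesis
    unfolding quot_basis_def comp_def
  proof (intro conjI allI impI ballI)
    show "finite T" by fact
    show "conv_ps2 (v (e i))" if "i \<in> T" for i
      using conv bij_betwE[OF e] that by blast
    show "c i = 0" if c: "(\<Sum>i\<in>T. fps_const (fps_const (c i)) * v (e i)) \<in> I" and i: "i \<in> T" for c i
    proof -
      have "(\<Sum>i\<in>T. fps_const (fps_const ((c \<circ> inv_into T e) (e i))) * v (e i)) \<in> I"
        using c inv by (simp cong: sum.cong)
      then have "\<forall>s\<in>S. (c \<circ> inv_into T e) s = 0" unfolding sum_e by (rule indep)
      then show "c i = 0" using bij_betwE[OF e] i inv[OF i] by force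
    qed
    show "\<exists>c. f - (\<Sum>i\<in>T. fps_const (fps_const (c i)) * v (e i)) \<in> I" if f: "conv_ps2 f" for f
    proof -
      obtain c where "f - (\<Sum>s\<in>S. fps_const (fps_const (c s)) * v s) \<in> I"
        using span[OF f] by blast
      then have "f - (\<Sum>i\<in>T. fps_const (fps_const (c (e i))) * v (e i)) \<in> I"
        unfolding sum_e .
      then show ?thesis by (rule exI[of _ "\<lambda>i. c (e i)"])
    qed
  qed
qed

lemma quot_basis_reindex:
  assumes "quot_basis I S v"
  shows "\<exists>v'. quot_basis I {..<card S} v'"
proof -
  have "finite S" using assms unfolding quot_basis_def by blast
  then obtain e where "bij_betw e {..<card S} S"
    using ex_bij_betw_nat_finite atLeast0LessThan by metis
  then show ?thesis using quot_basis_bij_betw assms by blast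
qed
lemma fps_of_poly_basis_comb:
  "fps_of_poly (basis_comb c m a n)
     = (\<Sum>(k, i)\<in>basis_index m n. fps_const (fps_const (c (k, i))) * (fps_const (fps_X ^ i) * fps_of_poly (root_prod a k n)))"
  unfolding basis_comb_def fps_of_poly_sum
  by (rule sum.cong) (simp_all only: case_prod_unfold fps_of_poly_smult fps_const_mult[symmetric] mult.assoc)

lemma low_coeffs_zero_imp_y_power_factor:
  fixes q :: "'a::comm_ring_1 poly"
  assumes "\<And>j. j < K \<Longrightarrow> coeff q j = 0"
  shows "\<exists>R. q = [:0, 1:] ^ K * R"
  using assms
proof (induction K arbitrary: q)
  case 0 then show ?case by auto
next
  case (Suc K)
  obtain c q' where q: "q = pCons c q'" by (cases q) auto
  have "c = 0" using Suc.prems[of 0] q by simp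
  moreover have "\<And>j. j < K \<Longrightarrow> coeff q' j = 0" using Suc.prems q by (metis Suc_mono coeff_pCons_Suc)
  then obtain R where "q' = [:0, 1:] ^ K * R" using Suc.IH by blast
  ultimately show ?case using q by (intro exI[of _ R]) (simp add: algebra_simps)
qed

text \<open>Truncating the power series cofactors at \<open>y\<close>-degree \<open>K\<close> leaves a polynomial remainder
  divisible by \<open>y\<^sup>K\<^sup>+\<^sup>1\<close>, which lies in the ideal with polynomial cofactors.\<close>
lemma fps_of_poly_in_ps_ideal2:
  assumes yK: "[:0, 1:] ^ K \<in> conv_poly_ideal W B"
    and q: "fps_of_poly q \<in> ps_ideal2 (fps_of_poly W) (fps_of_poly B)"
  shows "\<exists>\<alpha> \<beta>. q = \<alpha> * W + \<beta> * B"
proof -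
  obtain h1 h2 where h: "fps_of_poly q = h1 * fps_of_poly W + h2 * fps_of_poly B"
    using q unfolding ps_ideal2_def by blast
  obtain \<alpha>' \<beta>' where ab': "[:0, 1:] ^ K = \<alpha>' * W + \<beta>' * B"
    using yK unfolding conv_poly_ideal_def by blast
  define r where "r = q - trunc_y K h1 * W - trunc_y K h2 * B"
  have tail: "h - fps_of_poly (trunc_y K h) = fps_X ^ Suc K * fps_shift (Suc K) h" for h :: "complex fps fps"
    using fps_split_trunc_y[of h K] by (metis add_diff_cancel_left')
  have "fps_of_poly r = fps_of_poly q - fps_of_poly (trunc_y K h1) * fps_of_poly W
      - fps_of_poly (trunc_y K h2) * fps_of_poly B"
    by (simp add: r_def fps_of_poly_diff fps_of_poly_mult)
  then have "fps_of_poly r = (h1 - fps_of_poly (trunc_y K h1)) * fps_of_poly W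
      + (h2 - fps_of_poly (trunc_y K h2)) * fps_of_poly B"
    unfolding h by (simp add: algebra_simps)
  also have "\<dots> = fps_X ^ Suc K * (fps_shift (Suc K) h1 * fps_of_poly W + fps_shift (Suc K) h2 * fps_of_poly B)"
    unfolding tail by (simp add: algebra_simps)
  finally have r_eq: "fps_of_poly r = \<dots>" .
  have "coeff r j = 0" if "j < Suc K" for j
    using arg_cong[OF r_eq, of "\<lambda>f. fps_nth f j"] that by (simp add: fps_X_power_mult_nth del: power_Suc)
  then obtain R where R: "r = [:0, 1:] ^ Suc K * R"
    using low_coeffs_zero_imp_y_power_factor by blast
  have "q = (trunc_y K h1 + [:0, 1:] * R * \<alpha>') * W + (trunc_y K h2 + [:0, 1:] * R * \<beta>') * B"
    using R ab' unfolding r_def by (simp add: algebra_simps)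
  then show ?thesis by blast
qed

lemma conv_ps2_mod_fps_of_poly:
  assumes yK: "[:0, 1:] ^ K \<in> conv_poly_ideal W B" and "conv_poly W" "conv_poly B"
    and g: "conv_ps2 g"
  shows "g - fps_of_poly (trunc_y K g) \<in> ps_ideal2 (fps_of_poly W) (fps_of_poly B)"
proof -
  obtain \<alpha>' \<beta>' where ab': "conv_poly \<alpha>'" "conv_poly \<beta>'" "[:0, 1:] ^ K = \<alpha>' * W + \<beta>' * B"
    using yK unfolding conv_poly_ideal_def by blast
  define t where "t = fps_X * fps_shift (Suc K) g"
  have "g - fps_of_poly (trunc_y K g) = fps_of_poly ([:0, 1:] ^ K) * t"
    using fps_split_trunc_y[of g K] by (simp add: t_def fps_of_poly_power fps_of_poly_pCons algebra_simps)
  also have "\<dots> = (t * fps_of_poly \<alpha>') * fps_of_poly W + (t * fps_of_poly \<beta>') * fps_of_poly B"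
    unfolding ab'(3) by (simp add: fps_of_poly_add fps_of_poly_mult algebra_simps)
  finally have "g - fps_of_poly (trunc_y K g) = (t * fps_of_poly \<alpha>') * fps_of_poly W + (t * fps_of_poly \<beta>') * fps_of_poly B" .
  moreover have "conv_ps2 (t * fps_of_poly \<alpha>')" "conv_ps2 (t * fps_of_poly \<beta>')"
    using ab' g by (auto simp: t_def)
  ultimately show ?thesis unfolding ps_ideal2_def by blast
qed

lemma quot_basis_root_prod:
  fixes B :: "complex fps poly"
  assumes a: "\<forall>j\<in>{1..n}. conv_ps1 (a j) \<and> fps_nth (a j) 0 = 0 \<and> poly B (a j) \<noteq> 0"
    and m: "\<forall>j. m j = subdegree (poly B (a j))"
    and B: "conv_poly B"
  shows "quot_basis (ps_ideal2 (fps_of_poly (root_prod a 0 n)) (fps_of_poly B)) (basis_index m n)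
           (\<lambda>(k, i). fps_const (fps_X ^ i) * fps_of_poly (root_prod a k n))"
proof -
  let ?W = "root_prod a 0 n" and ?I = "ps_ideal2 (fps_of_poly (root_prod a 0 n)) (fps_of_poly B)"
  let ?v = "\<lambda>(k, i). fps_const (fps_X ^ i) * fps_of_poly (root_prod a k n)"
  obtain K where yK: "[:0, 1:] ^ K \<in> conv_poly_ideal ?W B"
    using y_power_in_conv_poly_ideal[OF a m B] by blast
  have W: "conv_poly (root_prod a k n)" for k using a by (intro conv_poly_root_prod) auto
  have sum_v: "(\<Sum>s\<in>basis_index m n. fps_const (fps_const (c s)) * ?v s) = fps_of_poly (basis_comb c m a n)"
    for c unfolding fps_of_poly_basis_comb by (simp add: case_prod_unfold)
  show ?thesis
    unfolding quot_basis_def sum_v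
  proof (intro conjI allI impI ballI)
    show "finite (basis_index m n)" by simp
    show "conv_ps2 (?v s)" for s
      using W by (auto simp: case_prod_unfold intro!: conv_ps2_mult conv_ps2_const conv_ps2_fps_of_poly)
    show "c s = 0" if c: "fps_of_poly (basis_comb c m a n) \<in> ?I" and s: "s \<in> basis_index m n" for c s
    proof -
      obtain \<alpha> \<beta> where "basis_comb c m a n = \<alpha> * ?W + \<beta> * B"
        using fps_of_poly_in_ps_ideal2[OF yK c] by blast
      then have "\<forall>(k, i)\<in>basis_index m n. c (k, i) = 0"
        by (rule basis_comb_independent[OF _ m, rotated]) (use a in auto)
      then show ?thesis using s by auto
    qed
    show "\<exists>c. g - fps_of_poly (basis_comb c m a n) \<in> ?I" if g: "conv_ps2 g" for g
    proof -
      obtain c \<alpha> \<beta> where cab: "conv_poly \<alpha>" "conv_poly \<beta>"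
          "trunc_y K g = basis_comb c m a n + \<alpha> * ?W + \<beta> * B"
        using basis_comb_spans[of n a B m, OF _ m B conv_poly_trunc_y[OF g, of K]] a by blast
      have "g - fps_of_poly (basis_comb c m a n)
          = (g - fps_of_poly (trunc_y K g)) + (fps_of_poly \<alpha> * fps_of_poly ?W + fps_of_poly \<beta> * fps_of_poly B)"
        unfolding cab(3) by (simp add: fps_of_poly_add fps_of_poly_mult)
      moreover have "g - fps_of_poly (trunc_y K g) \<in> ?I"
        by (rule conv_ps2_mod_fps_of_poly[OF yK W B g])
      moreover have "fps_of_poly \<alpha> * fps_of_poly ?W + fps_of_poly \<beta> * fps_of_poly B \<in> ?I"
        unfolding ps_ideal2_def using cab by blast
      ultimately show ?thesis by (metis ps_ideal2_add)
    qed
  qed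
qed

section \<open>The real and imaginary parts of \<open>P\<close>\<close>

lemma map_fps_of_poly_add: "map_poly fps_of_poly (p + q) = map_poly fps_of_poly p + map_poly fps_of_poly q"
  by (rule poly_eqI) (simp add: coeff_map_poly fps_of_poly_add)
lemma map_fps_of_poly_mult: "map_poly fps_of_poly (p * q) = map_poly fps_of_poly p * map_poly fps_of_poly q"
  by (rule poly_eqI) (simp add: coeff_map_poly coeff_mult fps_of_poly_sum fps_of_poly_mult)
lemma map_fps_of_poly_smult:
  "map_poly fps_of_poly (smult c p) = smult (fps_of_poly c) (map_poly fps_of_poly p)"
  by (rule map_poly_smult) (auto simp: fps_of_poly_mult)

lemma ps_of_poly2_add: "ps_of_poly2 (p + q) = ps_of_poly2 p + ps_of_poly2 q"
  unfolding ps_of_poly2_def by (simp add: map_fps_of_poly_add fps_of_poly_add)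
lemma ps_of_poly2_smult: "ps_of_poly2 (smult [:c:] p) = fps_const (fps_const c) * ps_of_poly2 p"
  unfolding ps_of_poly2_def by (simp add: map_fps_of_poly_smult fps_of_poly_smult)

text \<open>By pseudo-division, a root polynomial of least degree divides every polynomial vanishing at
  \<open>b\<close> up to a constant of \<open>\<complex>[x]\<close>; Gauss's lemma removes the constant.\<close>
lemma primitive_part_dvd_if_least_degree_root:
  fixes \<pi> R :: "complex poly poly"
  assumes \<pi>0: "\<pi> \<noteq> 0" and h\<pi>: "poly (map_poly fps_of_poly \<pi>) b = 0"
    and \<pi>_min: "\<And>S. S \<noteq> 0 \<Longrightarrow> poly (map_poly fps_of_poly S) b = 0 \<Longrightarrow> degree \<pi> \<le> degree S"
    and hR: "poly (map_poly fps_of_poly R) b = 0"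
  shows "primitive_part \<pi> dvd R"
proof -
  let ?h = "\<lambda>S. poly (map_poly fps_of_poly S) b"
  obtain q r where qr: "pseudo_divmod R \<pi> = (q, r)" by (cases "pseudo_divmod R \<pi>") auto
  define k where "k = Suc (degree R) - degree \<pi>"
  have eq: "smult (lead_coeff \<pi> ^ k) R = \<pi> * q + r" using pseudo_divmod(1)[OF \<pi>0 qr] k_def by simp
  have "?h r = 0" using hR h\<pi> arg_cong[OF eq, of ?h]
    by (simp add: map_fps_of_poly_mult map_fps_of_poly_add map_fps_of_poly_smult)
  have "r = 0"
  proof (rule ccontr)
    assume "r \<noteq> 0"
    then have "degree \<pi> \<le> degree r" using \<open>?h r = 0\<close> \<pi>_min by blast
    then show False using pseudo_divmod(2)[OF \<pi>0 qr] \<open>r \<noteq> 0\<close> by simp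
  qed
  have "primitive_part \<pi> dvd \<pi>" by (metis content_times_primitive_part dvd_smult dvd_refl)
  also have "\<pi> dvd smult (lead_coeff \<pi> ^ k) R" using eq \<open>r = 0\<close> by simp
  finally have "fract_poly (primitive_part \<pi>) dvd fract_poly (smult (lead_coeff \<pi> ^ k) R)"
    by (rule fract_poly_dvd)
  then have "fract_poly (primitive_part \<pi>) dvd smult (to_fract (lead_coeff \<pi> ^ k)) (fract_poly R)"
    by simp
  moreover have "to_fract (lead_coeff \<pi> ^ k) \<noteq> 0" using \<pi>0 by simp
  ultimately have "fract_poly (primitive_part \<pi>) dvd fract_poly R" by (metis dvd_smult_iff)
  moreover have "content (primitive_part \<pi>) = 1" using \<pi>0 by simp
  ultimately show ?thesis by (rule fract_poly_dvdD)
qed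

lemma common_root_imp_common_factor:
  fixes P Q :: "complex poly poly"
  assumes hP: "poly (map_poly fps_of_poly P) b = 0" and hQ: "poly (map_poly fps_of_poly Q) b = 0"
    and P0: "P \<noteq> 0"
  shows "\<exists>D. D dvd P \<and> D dvd Q \<and> \<not> is_unit D"
proof -
  let ?h = "\<lambda>S. poly (map_poly fps_of_poly S) b"
  obtain \<pi> where \<pi>: "\<pi> \<noteq> 0" "?h \<pi> = 0" and \<pi>_min: "\<And>S. S \<noteq> 0 \<Longrightarrow> ?h S = 0 \<Longrightarrow> degree \<pi> \<le> degree S"
    using ex_has_least_nat[of "\<lambda>S. S \<noteq> 0 \<and> ?h S = 0" P degree] hP P0 by blast
  have "degree \<pi> > 0"
  proof (rule ccontr)
    assume "\<not> degree \<pi> > 0"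
    then obtain c where c: "\<pi> = [:c:]" by (metis degree_0_id neq0_conv)
    have "map_poly fps_of_poly [:c:] = [:fps_of_poly c:]"
      by (rule poly_eqI) (simp add: coeff_map_poly coeff_pCons split: nat.splits)
    then show False using \<pi> unfolding c by simp
  qed
  moreover have "is_unit (primitive_part \<pi>) \<Longrightarrow> degree (primitive_part \<pi>) \<le> degree (1 :: complex poly poly)"
    by (rule dvd_imp_degree_le) auto
  ultimately have "\<not> is_unit (primitive_part \<pi>)" by auto
  moreover have "primitive_part \<pi> dvd P" "primitive_part \<pi> dvd Q"
    using primitive_part_dvd_if_least_degree_root[OF \<pi> \<pi>_min] hP hQ by auto
  ultimately show ?thesis by blast
qed

lemma conj_poly2_0 [simp]: "conj_poly2 0 = 0"
  by (simp add: conj_poly2_def)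

lemma re_im_part_identities:
  fixes P A B :: "complex poly poly" and t :: complex
  assumes A: "A = smult [:1/2:] (P + conj_poly2 P)" and B: "B = smult [:1/(2*\<i>):] (P - conj_poly2 P)"
  shows "P = (A + smult [:t:] B) + smult [:\<i> - t:] B"
    and "conj_poly2 P = (A + smult [:t:] B) + smult [:- \<i> - t:] B"
    and "A + smult [:t:] B = smult [:1/2 + t/(2*\<i>):] P + smult [:1/2 - t/(2*\<i>):] (conj_poly2 P)"
    and "B = smult [:1/(2*\<i>):] P + smult [:- 1/(2*\<i>):] (conj_poly2 P)"
  unfolding A B by (rule poly_eqI, rule poly_eqI, simp add: field_simps)+

lemma ps_ideal2_conj_eq_re_im:
  fixes P A B :: "complex poly poly" and t :: complex
  assumes A: "A = smult [:1/2:] (P + conj_poly2 P)" and B: "B = smult [:1/(2*\<i>):] (P - conj_poly2 P)"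
  shows "ps_ideal2 (ps_of_poly2 P) (ps_of_poly2 (conj_poly2 P)) = ps_ideal2 (ps_of_poly2 (A + smult [:t:] B)) (ps_of_poly2 B)"
  (is "?I = ?J")
proof -
  note ids = re_im_part_identities(1-3)[OF A B, of t] re_im_part_identities(4)[OF A B]
  let ?G = "ps_of_poly2 (A + smult [:t:] B)"
  have c: "conv_ps2 (fps_const (fps_const c))" for c
    using conv_ps2_const[of "fps_const c"] by auto
  have "ps_of_poly2 P = fps_const (fps_const 1) * ?G + fps_const (fps_const (\<i> - t)) * ps_of_poly2 B"
    by (subst ids(1)) (simp add: ps_of_poly2_add ps_of_poly2_smult)
  moreover have "ps_of_poly2 (conj_poly2 P) = fps_const (fps_const 1) * ?G + fps_const (fps_const (- \<i> - t)) * ps_of_poly2 B"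
    by (subst ids(2)) (simp add: ps_of_poly2_add ps_of_poly2_smult)
  ultimately have "?I \<subseteq> ?J" by (rule ps_ideal2_subset[OF c c c c])
  have "?G = fps_const (fps_const (1/2 + t/(2*\<i>))) * ps_of_poly2 P
      + fps_const (fps_const (1/2 - t/(2*\<i>))) * ps_of_poly2 (conj_poly2 P)"
    by (subst ids(3)) (simp add: ps_of_poly2_add ps_of_poly2_smult)
  moreover have "ps_of_poly2 B = fps_const (fps_const (1/(2*\<i>))) * ps_of_poly2 P
      + fps_const (fps_const (- 1/(2*\<i>))) * ps_of_poly2 (conj_poly2 P)"
    by (subst ids(4)) (simp add: ps_of_poly2_add ps_of_poly2_smult)
  ultimately have "?J \<subseteq> ?I" by (rule ps_ideal2_subset[OF c c c c])
  with \<open>?I \<subseteq> ?J\<close> show ?thesis by blast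
qed

lemma poly_eq_0_at_factor_root:
  fixes G :: "complex poly poly" and a :: "nat \<Rightarrow> complex fps"
  assumes factor: "ps_of_poly2 G = u * (\<Prod>j=1..M. fps_X - fps_const (a j))"
    and j: "j \<in> {1..M}" and a0: "fps_nth (a j) 0 = 0"
  shows "poly (map_poly fps_of_poly G) (a j) = 0"
proof -
  have W: "(\<Prod>j=1..M. fps_X - fps_const (a j)) = fps_of_poly (root_prod a 0 M)"
    by (simp add: fps_of_poly_root_prod)
  have "poly (map_poly fps_of_poly G) (a j) = subst_y (ps_of_poly2 G) (a j)"
    unfolding ps_of_poly2_def by (rule subst_y_fps_of_poly[OF a0, symmetric])
  also have "\<dots> = subst_y u (a j) * poly (root_prod a 0 M) (a j)"
    unfolding factor W subst_y_mult[OF a0] subst_y_fps_of_poly[OF a0] ..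
  also have "poly (root_prod a 0 M) (a j) = 0" using j by (intro poly_root_prod_root) auto
  finally show ?thesis by simp
qed

lemma im_part_nonzero_at_root:
  fixes P A B :: "complex poly poly" and t :: complex
  assumes nocommon: "\<forall>Q. Q dvd P \<and> Q dvd conj_poly2 P \<longrightarrow> is_unit Q"
    and A: "A = smult [:1/2:] (P + conj_poly2 P)" and B: "B = smult [:1/(2*\<i>):] (P - conj_poly2 P)"
    and G0: "poly (map_poly fps_of_poly (A + smult [:t:] B)) b = 0"
  shows "poly (map_poly fps_of_poly B) b \<noteq> 0"
proof
  assume B0: "poly (map_poly fps_of_poly B) b = 0"
  note ids = re_im_part_identities(1,2)[OF A B, of t]
  have "poly (map_poly fps_of_poly P) b = 0" "poly (map_poly fps_of_poly (conj_poly2 P)) b = 0"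
    using G0 B0 by (subst ids(1) ids(2); simp add: map_fps_of_poly_add map_fps_of_poly_smult)+
  moreover have "P \<noteq> 0" using nocommon[rule_format, of 0] by auto
  ultimately show False using common_root_imp_common_factor nocommon by blast
qed

lemma cofactor_eq_root_prod:
  fixes a :: "nat \<Rightarrow> complex fps"
  assumes factor: "G = u * (\<Prod>j=1..M. fps_X - fps_const (a j))"
    and F: "F * (\<Prod>j=1..k. fps_X - fps_const (a j)) = G" and k: "k \<le> M"
  shows "F = u * fps_of_poly (root_prod a k M)"
proof -
  have "fps_of_poly (root_prod a 0 M) = fps_of_poly (root_prod a 0 k) * fps_of_poly (root_prod a k M)"
    by (simp add: root_prod_split[OF k] fps_of_poly_mult)
  then have "F * fps_of_poly (root_prod a 0 k) = u * fps_of_poly (root_prod a k M) * fps_of_poly (root_prod a 0 k)"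
    using F factor by (simp add: fps_of_poly_root_prod[of a 0] mult_ac)
  moreover have "fps_of_poly (root_prod a 0 k) \<noteq> 0"
    unfolding fps_of_poly_root_prod by simp
  ultimately show ?thesis by simp
qed

theorem proposition7p1:
  fixes P A B :: "complex poly poly" and t :: real and M :: nat
    and a :: "nat \<Rightarrow> complex fps" and u :: "complex fps fps"
    and m :: "nat \<Rightarrow> nat" and F :: "nat \<Rightarrow> complex fps fps"
  assumes nozero: "\<forall>x::real. \<forall>y. Im y > 0 \<longrightarrow> eval2 P (of_real x) y \<noteq> 0"
    and nocommon: "\<forall>Q. Q dvd P \<and> Q dvd conj_poly2 P \<longrightarrow> is_unit Q"
    and M_def: "M = order 0 (map_poly (\<lambda>c. poly c 0) P)"
    and lead_real: "coeff (map_poly (\<lambda>c. poly c 0) P) M \<in> \<real>"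
    and A_def: "A = smult [:1/2:] (P + conj_poly2 P)"
    and B_def: "B = smult [:1/(2*\<i>):] (P - conj_poly2 P)"
    and branches: "\<forall>j\<in>{1..M}. real_ps1 (a j) \<and> fps_nth (a j) 0 = 0"
    and u_unit: "conv_ps2 u" "fps_nth (fps_nth u 0) 0 \<noteq> 0"
    and factor: "ps_of_poly2 (A + smult [:complex_of_real t:] B)
                   = u * (\<Prod>j=1..M. fps_X - fps_const (a j))"
    and m_def: "\<forall>j. m j = subdegree (poly (map_poly fps_of_poly B) (a j))"
    and F_def: "\<forall>k\<in>{1..M}. F k * (\<Prod>j=1..k. fps_X - fps_const (a j))
                   = ps_of_poly2 (A + smult [:complex_of_real t:] B)"
  shows "quot_basis (ps_ideal2 (ps_of_poly2 P) (ps_of_poly2 (conj_poly2 P)))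
           {(k, i). k \<in> {1..M} \<and> i < m k} (\<lambda>(k, i). fps_const (fps_X ^ i) * F k)
         \<and> (\<exists>v. quot_basis (ps_ideal2 (ps_of_poly2 P) (ps_of_poly2 (conj_poly2 P)))
                  {..<(\<Sum>j=1..M. m j)} v)"
proof -
  let ?G = "A + smult [:complex_of_real t:] B"
  have a: "\<forall>j\<in>{1..M}. conv_ps1 (a j) \<and> fps_nth (a j) 0 = 0 \<and> poly (map_poly fps_of_poly B) (a j) \<noteq> 0"
    using branches poly_eq_0_at_factor_root[OF factor] im_part_nonzero_at_root[OF nocommon A_def B_def]
    unfolding real_ps1_def by blast
  obtain w where w: "conv_ps2 w" "u * w = 1" using conv_ps2_unit_inverse[OF u_unit] .
  have "quot_basis (ps_ideal2 (u * fps_of_poly (root_prod a 0 M)) (ps_of_poly2 B)) (basis_index m M)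
      (\<lambda>s. u * (case s of (k, i) \<Rightarrow> fps_const (fps_X ^ i) * fps_of_poly (root_prod a k M)))"
    using quot_basis_mult_unit[OF quot_basis_root_prod[OF a m_def] u_unit(1) w] unfolding ps_of_poly2_def by simp
  moreover have "ps_of_poly2 ?G = u * fps_of_poly (root_prod a 0 M)"
    using factor by (simp add: fps_of_poly_root_prod)
  ultimately have qb0: "quot_basis (ps_ideal2 (ps_of_poly2 P) (ps_of_poly2 (conj_poly2 P))) (basis_index m M)
      (\<lambda>s. u * (case s of (k, i) \<Rightarrow> fps_const (fps_X ^ i) * fps_of_poly (root_prod a k M)))"
    unfolding ps_ideal2_conj_eq_re_im[OF A_def B_def, of "complex_of_real t"] by simp
  have F_eq: "F k = u * fps_of_poly (root_prod a k M)" if "k \<in> {1..M}" for k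
    using cofactor_eq_root_prod[OF factor] F_def that by auto
  have qb: "quot_basis (ps_ideal2 (ps_of_poly2 P) (ps_of_poly2 (conj_poly2 P))) (basis_index m M)
      (\<lambda>(k, i). fps_const (fps_X ^ i) * F k)"
    using qb0 by (rule quot_basis_cong[THEN iffD1, rotated]) (auto simp: basis_index_def F_eq mult_ac)
  moreover have "\<exists>v. quot_basis (ps_ideal2 (ps_of_poly2 P) (ps_of_poly2 (conj_poly2 P))) {..<(\<Sum>j=1..M. m j)} v"
    using quot_basis_reindex[OF qb] unfolding card_basis_index .
  ultimately show ?thesis unfolding basis_index_def by blast
qed
end
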